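(* Let the mesh, coefficients $a^{(n)}_{n-k}$, DCC kernels $p^{(n)}_{n-k}$ and consistency errors $R^n$ be as in the context (in particular $\tau_{n-1}\le\tau_n$ for $2\le n\le N$). Let $v\in C([0,T])\cap C^2((0,T])$ and suppose there are constants $c_v>0$ and $\sigma\in(0,1)\cup(1,2)$ with $|v''(t)|\le c_v(1+t^{\sigma-2})$ for $0<t\le T$. Then there is a constant $C>0$ depending only on $c_v$, $\sigma$ and $T$ such that for every $1\le n\le N$, $$\sum_{j=1}^n p^{(n)}_{n-j}|R^j|\le C\Big(\tau_1^{\sigma}+\frac{1}{1-\alpha}\max_{2\le j\le n}(t_{j-1/2}-t_{1/2})^{\alpha}\,t_{j-3/2}^{\sigma-2}\,\tau_{j-1/2}^{2-\alpha}\Big).$$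
   Context: Fix $T>0$, $0<\alpha<1$ and a mesh $0=t_0<t_1<\dots<t_N=T$ with step sizes $\tau_n=t_n-t_{n-1}$ satisfying $\tau_{n-1}\le\tau_n$ for $2\le n\le N$. Set $t_{-1/2}=t_0$, $t_{n-1/2}=t_{n-1}+\tau_n/2$ for $1\le n\le N$, $\tau_{1/2}=\tau_1/2$ and $\tau_{n-1/2}=(\tau_n+\tau_{n-1})/2$ for $n\ge 2$. Let $\omega_\gamma(t)=t^{\gamma-1}/\Gamma(\gamma)$ for $t>0$. For $1\le n\le N$ and $1\le k\le n$ define $$a^{(n)}_{n-k}=\frac{1}{\tau_{k-1/2}}\int_{t_{k-3/2}}^{t_{k-1/2}}\omega_{1-\alpha}(t_{n-1/2}-s)\,ds .$$ The discrete complementary convolution (DCC) kernels are defined by $p^{(n)}_0=1/a^{(n)}_0$ and $p^{(n)}_{n-k}=\frac{1}{a^{(k)}_0}\sum_{j=k+1}^n\big(a^{(j)}_{j-k-1}-a^{(j)}_{j-k}\big)p^{(n)}_{n-j}$ for $1\le k\le n-1$; equivalently $\sum_{j=k}^n p^{(n)}_{n-j}a^{(j)}_{j-k}=1$ for all $1\le k\le n$. The Caputo derivative of order $\alpha$ is ${}^C_0D^\alpha_t v(t)=\int_0^t\omega_{1-\alpha}(t-s)v'(s)\,ds$, and the local consistency error at $t_{n-1/2}$ is $$R^n={}^C_0D^\alpha_t v(t_{n-1/2})-\sum_{k=1}^n a^{(n)}_{n-k}\big(v(t_{k-1/2})-v(t_{k-3/2})\big),\qquad 1\le n\le N.$$ 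*)

theory Defs
  imports "HOL-Analysis.Analysis"
begin

definition omega :: "real \<Rightarrow> real \<Rightarrow> real" where
  "omega \<gamma> x = (if x > 0 then x powr (\<gamma> - 1) / Gamma \<gamma> else 0)"

definition tau :: "(nat \<Rightarrow> real) \<Rightarrow> nat \<Rightarrow> real" where
  "tau t n = t n - t (n - 1)"

text \<open>th t k = t_(k-1/2): th t 0 = t_(-1/2) = t_0, th t k = t_(k-1) + tau_k/2 for k >= 1.\<close>
definition th :: "(nat \<Rightarrow> real) \<Rightarrow> nat \<Rightarrow> real" where
  "th t k = (if k = 0 then t 0 else t (k - 1) + tau t k / 2)"

text \<open>tauh t k = tau_(k-1/2): tau_(1/2) = tau_1/2, tau_(k-1/2) = (tau_k + tau_(k-1))/2 for k >= 2.\<close>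
definition tauh :: "(nat \<Rightarrow> real) \<Rightarrow> nat \<Rightarrow> real" where
  "tauh t k = (if k \<le> 1 then tau t 1 / 2 else (tau t k + tau t (k - 1)) / 2)"

text \<open>acoef alpha t n k = a^(n)_(n-k)
  = 1/tau_(k-1/2) * integral over [t_(k-3/2), t_(k-1/2)] of omega_(1-alpha)(t_(n-1/2) - s).\<close>
definition acoef :: "real \<Rightarrow> (nat \<Rightarrow> real) \<Rightarrow> nat \<Rightarrow> nat \<Rightarrow> real" where
  "acoef \<alpha> t n k = (1 / tauh t k) *
      integral {th t (k - 1) .. th t k} (\<lambda>s. omega (1 - \<alpha>) (th t n - s))"

text \<open>DCC kernels: dcc alpha t n m = p^(n)_m (so p^(n)_(n-k) = dcc alpha t n (n-k)).
  p^(n)_0 = 1/a^(n)_0 and, for k = n - m with 1 <= k <= n-1,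
  p^(n)_(n-k) = 1/a^(k)_0 * sum_(j=k+1..n) (a^(j)_(j-k-1) - a^(j)_(j-k)) p^(n)_(n-j).\<close>
function dcc :: "real \<Rightarrow> (nat \<Rightarrow> real) \<Rightarrow> nat \<Rightarrow> nat \<Rightarrow> real" where
  "dcc \<alpha> t n m =
     (if m = 0 then 1 / acoef \<alpha> t n n
      else 1 / acoef \<alpha> t (n - m) (n - m) *
        (\<Sum>j\<in>{n - m + 1 .. n}.
           (acoef \<alpha> t j (n - m + 1) - acoef \<alpha> t j (n - m)) * dcc \<alpha> t n (n - j)))"
  by pat_completeness auto
termination
  by (relation "Wellfounded.measure (\<lambda>(\<alpha>, t, n, m). m)") auto

text \<open>Caputo derivative of order alpha at time x, for a function whose derivative is v1:
  integral over [0,x] of omega_(1-alpha)(x - s) v'(s).\<close>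
definition caputo :: "real \<Rightarrow> (real \<Rightarrow> real) \<Rightarrow> real \<Rightarrow> real" where
  "caputo \<alpha> v1 x = integral {0 .. x} (\<lambda>s. omega (1 - \<alpha>) (x - s) * v1 s)"

definition Rerr :: "real \<Rightarrow> (nat \<Rightarrow> real) \<Rightarrow> (real \<Rightarrow> real) \<Rightarrow> (real \<Rightarrow> real) \<Rightarrow> nat \<Rightarrow> real" where
  "Rerr \<alpha> t v v1 n = caputo \<alpha> v1 (th t n)
      - (\<Sum>k = 1..n. acoef \<alpha> t n k * (v (th t k) - v (th t (k - 1))))"

end

theory Submission
  imports Defs
begin

text \<open>
  Write the consistency error as R^j = \<Sum>_k e_jk, where e_jk is the integral over the k-th cell
  [t_(k-3/2), t_(k-1/2)] of the kernel \<omega>_(1-\<alpha>)(t_(j-1/2) - s) against v'(s) - \<delta>_k, and \<delta>_k is the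
  mean of v' over that cell. For k \<ge> 2 the factor v' - \<delta>_k is bounded by the cell length times the
  bound for v'' on the cell; as it has mean zero, for k < j only the variation of the kernel
  across the cell, which is at most a^(j)_(j-k-1) - a^(j)_(j-k), survives. On the first cell v' is
  compared with v'(t_(1/2)), which costs the integrable singularity s^(\<sigma>-1).

  Weighting with the DCC kernels, their defining recursion collapses each column of
  off-diagonal terms onto its diagonal term, and the identity \<Sum>_j p^(n)_(n-j) a^(j)_(j-k) = 1 (used
  for k = 1, 2) absorbs the rest: the first column gives O(\<tau>_1^\<sigma>), and the diagonal term of cell
  k \<ge> 2 is at most a^(k)_(k-2) / (1 - \<alpha>) times the k-th term of the maximum, because
  \<Gamma>(1-\<alpha>)^(-1) = (t_(k-1/2) - t_(1/2))^\<alpha> \<omega>_(1-\<alpha>)(t_(k-1/2) - t_(1/2)) \<le> (t_(k-1/2) - t_(1/2))^\<alpha> a^(k)_(k-2).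
\<close>

declare dcc.simps [simp del]

section \<open>Elementary real analysis\<close>

lemma has_integral_powr_neg_diff:
  fixes y a b \<alpha> :: real
  assumes "\<alpha> < 1" and "a \<le> b" "b \<le> y"
  shows "((\<lambda>s. (y - s) powr (-\<alpha>)) has_integral
           ((y - a) powr (1 - \<alpha>) - (y - b) powr (1 - \<alpha>)) / (1 - \<alpha>)) {a..b}"
proof -
  define F where "F s = - ((y - s) powr (1 - \<alpha>)) / (1 - \<alpha>)" for s
  have "continuous_on {a..b} F"
    unfolding F_def using assms by (intro continuous_intros continuous_on_powr') auto
  moreover have "(F has_vector_derivative (y - s) powr (-\<alpha>)) (at s)" if "s \<in> {a<..<b}" for s
  proof -
    have "0 < y - s" using that assms by auto
    then have "(F has_real_derivative (1 - \<alpha>) * (y - s) powr (1 - \<alpha> - 1) / (1 - \<alpha>)) (at s)"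
      unfolding F_def by (auto intro!: derivative_eq_intros)
    then show ?thesis
      using assms by (simp add: has_real_derivative_iff_has_vector_derivative)
  qed
  ultimately have "((\<lambda>s. (y - s) powr (-\<alpha>)) has_integral (F b - F a)) {a..b}"
    by (intro fundamental_theorem_of_calculus_interior \<open>a \<le> b\<close>)
  moreover have "F b - F a = ((y - a) powr (1 - \<alpha>) - (y - b) powr (1 - \<alpha>)) / (1 - \<alpha>)"
    unfolding F_def by (simp add: diff_divide_distrib)
  ultimately show ?thesis by simp
qed

lemma sum_triangle_swap:
  fixes g :: "nat \<Rightarrow> nat \<Rightarrow> 'a::comm_monoid_add"
  shows "(\<Sum>j=1..n. \<Sum>k=1..j. g j k) = (\<Sum>k=1..n. \<Sum>j=k..n. g j k)"
proof (induction n)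
  case (Suc n)
  have "(\<Sum>k=1..Suc n. \<Sum>j=k..Suc n. g j k) = (\<Sum>k=1..n. \<Sum>j=k..Suc n. g j k) + g (Suc n) (Suc n)"
    by simp
  also have "(\<Sum>k=1..n. \<Sum>j=k..Suc n. g j k) = (\<Sum>k=1..n. (\<Sum>j=k..n. g j k) + g (Suc n) k)"
    by (intro sum.cong) auto
  finally show ?case
    using Suc by (simp add: sum.distrib)
qed simp

lemma abs_diff_le_of_deriv_bound:
  fixes f g f' g' :: "real \<Rightarrow> real"
  assumes "r \<le> s" and "continuous_on {r..s} f" "continuous_on {r..s} g"
    and f': "\<And>y. r < y \<Longrightarrow> y < s \<Longrightarrow> (f has_real_derivative f' y) (at y)"
    and g': "\<And>y. r < y \<Longrightarrow> y < s \<Longrightarrow> (g has_real_derivative g' y) (at y)"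
    and bound: "\<And>y. r < y \<Longrightarrow> y < s \<Longrightarrow> \<bar>f' y\<bar> \<le> g' y"
  shows "\<bar>f s - f r\<bar> \<le> g s - g r"
proof -
  have "g r - f r \<le> g s - f s"
  proof (rule DERIV_nonneg_imp_increasing_open[OF \<open>r \<le> s\<close>])
    fix y assume "r < y" "y < s"
    then show "\<exists>d. ((\<lambda>y. g y - f y) has_real_derivative d) (at y) \<and> 0 \<le> d"
      using DERIV_diff[OF g' f'] bound by (metis abs_le_D1 diff_ge_0_iff_ge)
  qed (intro continuous_intros assms(2,3))
  moreover have "g r + f r \<le> g s + f s"
  proof (rule DERIV_nonneg_imp_increasing_open[OF \<open>r \<le> s\<close>])
    fix y assume "r < y" "y < s"
    then show "\<exists>d. ((\<lambda>y. g y + f y) has_real_derivative d) (at y) \<and> 0 \<le> d"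
      using DERIV_add[OF g' f'] bound by (metis abs_le_D2 add.commute le_add_same_cancel1 minus_add_cancel)
  qed (intro continuous_intros assms(2,3))
  ultimately show ?thesis by linarith
qed

lemma dominated_product_integral:
  fixes f h g :: "real \<Rightarrow> real"
  assumes "f integrable_on {a..b}" "h integrable_on {a..b}" "(g has_integral I) {a..b}"
    and "\<And>s. s \<in> {a..b} \<Longrightarrow> \<bar>f s * h s\<bar> \<le> g s"
  shows "(\<lambda>s. f s * h s) integrable_on {a..b}"
    and "\<bar>integral {a..b} (\<lambda>s. f s * h s)\<bar> \<le> I"
proof -
  have "(\<lambda>s. f s * h s) absolutely_integrable_on {a..b}"
    using assms
    by (intro measurable_bounded_by_integrable_imp_absolutely_integrable[where g=g]
        borel_measurable_times integrable_imp_measurable) auto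
  then show integrable: "(\<lambda>s. f s * h s) integrable_on {a..b}"
    using absolutely_integrable_on_def by blast
  show "\<bar>integral {a..b} (\<lambda>s. f s * h s)\<bar> \<le> I"
    using integral_norm_bound_integral[OF integrable has_integral_integrable[OF assms(3)]] assms(4)
      integral_unique[OF assms(3)] by auto
qed

lemma abs_average_minus_le:
  fixes f g :: "real \<Rightarrow> real"
  assumes "a < b" "f integrable_on {a..b}" "(g has_integral I) {a..b}"
    and "\<And>r. r \<in> {a..b} \<Longrightarrow> \<bar>f r - c\<bar> \<le> g r"
  shows "\<bar>integral {a..b} f / (b - a) - c\<bar> \<le> I / (b - a)"
proof -
  have "integral {a..b} (\<lambda>r. f r - c) = integral {a..b} f - (b - a) * c"
    using assms(1,2) integral_diff[of f "{a..b}" "\<lambda>r. c"] integrable_const_ivl[of c a b]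
    by (simp add: mult.commute)
  moreover have "(\<lambda>r. f r - c) integrable_on {a..b}"
    using assms(2) by (intro integrable_diff integrable_const_ivl)
  then have "\<bar>integral {a..b} (\<lambda>r. f r - c)\<bar> \<le> I"
    using integral_norm_bound_integral[of "\<lambda>r. f r - c" "{a..b}" g] assms(3,4)
      integral_unique[OF assms(3)] by (auto simp: has_integral_integrable)
  ultimately have "\<bar>integral {a..b} f - (b - a) * c\<bar> \<le> I"
    by simp
  moreover have "integral {a..b} f / (b - a) - c = (integral {a..b} f - (b - a) * c) / (b - a)"
    using assms(1) by (simp add: field_simps)
  ultimately show ?thesis
    using assms(1) by (simp add: divide_right_mono)
qed

lemma powr_neg_mult_powr_split:
  fixes b s \<alpha> \<sigma> :: real
  assumes "0 < b" "0 \<le> s" "s \<le> b" "0 < \<alpha>" "0 < \<sigma>"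
  shows "(b - s) powr (-\<alpha>) * s powr (\<sigma> - 1)
           \<le> (b/2) powr (-\<alpha>) * s powr (\<sigma> - 1) + 2 * b powr (\<sigma> - 1) * (b - s) powr (-\<alpha>)"
proof (cases "s \<le> b/2")
  case True
  have "(b - s) powr (-\<alpha>) \<le> (b/2) powr (-\<alpha>)"
    using True assms by (intro powr_mono2') auto
  then have "(b - s) powr (-\<alpha>) * s powr (\<sigma> - 1) \<le> (b/2) powr (-\<alpha>) * s powr (\<sigma> - 1)"
    by (intro mult_right_mono) auto
  then show ?thesis by (smt (verit) mult_nonneg_nonneg powr_ge_zero)
next
  case False
  have "s powr (\<sigma> - 1) \<le> 2 * b powr (\<sigma> - 1)"
  proof (cases "\<sigma> < 1")
    case True
    have "s powr (\<sigma> - 1) \<le> (b/2) powr (\<sigma> - 1)"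
      using True False assms by (intro powr_mono2') auto
    also have "\<dots> = b powr (\<sigma> - 1) * 2 powr (1 - \<sigma>)"
      using assms powr_minus_divide[of 2 "\<sigma> - 1"] by (simp add: powr_divide)
    also have "\<dots> \<le> b powr (\<sigma> - 1) * 2"
      using powr_mono[of "1 - \<sigma>" 1 2] assms by (intro mult_left_mono) auto
    finally show ?thesis by simp
  next
    case False
    then have "s powr (\<sigma> - 1) \<le> b powr (\<sigma> - 1)"
      using assms by (intro powr_mono2) auto
    then show ?thesis using powr_ge_zero[of b "\<sigma> - 1"] by linarith
  qed
  then have "(b - s) powr (-\<alpha>) * s powr (\<sigma> - 1) \<le> 2 * b powr (\<sigma> - 1) * (b - s) powr (-\<alpha>)"
    by (metis mult.commute mult_left_mono powr_ge_zero)
  then show ?thesis by (smt (verit) mult_nonneg_nonneg powr_ge_zero)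
qed

section \<open>Midpoint meshes and the DCC kernels\<close>

locale midpoint_mesh =
  fixes \<alpha> :: real and N :: nat and t :: "nat \<Rightarrow> real"
  assumes alpha_pos: "0 < \<alpha>" and alpha_less_1: "\<alpha> < 1"
    and t_0: "t 0 = 0"
    and t_step: "\<And>n. 1 \<le> n \<Longrightarrow> n \<le> N \<Longrightarrow> t (n - 1) < t n"
begin

text \<open>In the notation of the paper, mid k = t_(k-1/2), len k = \<tau>_(k-1/2), A j k = a^(j)_(j-k) and
  p n j = p^(n)_(n-j).\<close>

abbreviation "mid \<equiv> th t"
abbreviation "len \<equiv> tauh t"
abbreviation "G \<equiv> Gamma (1 - \<alpha>)"
abbreviation "kern j s \<equiv> omega (1 - \<alpha>) (mid j - s)"
abbreviation "A j k \<equiv> acoef \<alpha> t j k"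
abbreviation "p n j \<equiv> dcc \<alpha> t n (n - j)"

lemma Gamma_pos: "0 < G"
  using alpha_less_1 by (simp add: Gamma_real_pos)

lemma t_mono: "i \<le> j \<Longrightarrow> j \<le> N \<Longrightarrow> t i \<le> t j"
proof (induction j)
  case (Suc j)
  then show ?case using t_step[of "Suc j"] by (cases "i = Suc j") auto
qed simp

lemma t_nonneg: "k \<le> N \<Longrightarrow> 0 \<le> t k"
  using t_mono[of 0 k] t_0 by simp

lemma mid_eq: "1 \<le> k \<Longrightarrow> mid k = (t (k - 1) + t k) / 2"
  by (simp add: th_def tau_def field_simps)

lemma mid_0: "mid 0 = 0"
  by (simp add: th_def t_0)

lemma mid_strict_mono: "i < j \<Longrightarrow> j \<le> N \<Longrightarrow> mid i < mid j"
proof -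
  assume ij: "i < j" "j \<le> N"
  have "t (j - 1) < t j" "0 \<le> t (j - 1)"
    using t_step[of j] t_nonneg[of "j - 1"] ij by auto
  moreover have "t (i - 1) \<le> t (j - 1)" "t i \<le> t (j - 1)"
    using t_mono ij by auto
  ultimately show ?thesis
    using ij mid_eq[of i] mid_eq[of j] mid_0 by (cases "i = 0") auto
qed

lemma mid_mono: "i \<le> j \<Longrightarrow> j \<le> N \<Longrightarrow> mid i \<le> mid j"
  using mid_strict_mono[of i j] by (cases "i = j") auto

lemma mid_pos: "1 \<le> k \<Longrightarrow> k \<le> N \<Longrightarrow> 0 < mid k"
  using mid_strict_mono[of 0 k] mid_0 by simp

lemma mid_le_t_N: "k \<le> N \<Longrightarrow> mid k \<le> t N"
proof (cases "k = 0")
  case False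
  assume "k \<le> N"
  then have "t (k - 1) \<le> t N" "t k \<le> t N"
    using t_mono by auto
  then show ?thesis
    using False mid_eq[of k] by simp
qed (use mid_0 t_nonneg in simp)

lemma len_eq: "1 \<le> k \<Longrightarrow> len k = mid k - mid (k - 1)"
  by (cases "k = 1") (auto simp: tauh_def th_def tau_def t_0 field_simps)

lemma len_pos: "1 \<le> k \<Longrightarrow> k \<le> N \<Longrightarrow> 0 < len k"
  using len_eq mid_strict_mono[of "k - 1" k] by simp

lemma integral_const_cell: "1 \<le> k \<Longrightarrow> k \<le> N \<Longrightarrow> integral {mid (k - 1)..mid k} (\<lambda>s. c) = len k * c"
  using len_eq[of k] mid_mono[of "k - 1" k] by simp

lemma kern_eq: "s \<le> mid j \<Longrightarrow> kern j s = (mid j - s) powr (-\<alpha>) / G"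
  by (auto simp: omega_def)

lemma kern_nonneg: "0 \<le> kern j s"
  using Gamma_pos by (auto simp: omega_def)

lemma kern_mono: "s \<le> r \<Longrightarrow> r < mid j \<Longrightarrow> kern j s \<le> kern j r"
  using alpha_pos Gamma_pos by (auto simp: kern_eq intro!: divide_right_mono powr_mono2')

lemma kern_has_integral:
  assumes "1 \<le> k" "k \<le> j" "j \<le> N"
  shows "(kern j has_integral
           ((mid j - mid (k - 1)) powr (1 - \<alpha>) - (mid j - mid k) powr (1 - \<alpha>)) / (1 - \<alpha>) / G)
         {mid (k - 1)..mid k}"
proof -
  have le: "mid (k - 1) \<le> mid k" "mid k \<le> mid j"
    using mid_mono assms by auto
  have "((\<lambda>s. (mid j - s) powr (-\<alpha>) / G) has_integral
          ((mid j - mid (k - 1)) powr (1 - \<alpha>) - (mid j - mid k) powr (1 - \<alpha>)) / (1 - \<alpha>) / G)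
        {mid (k - 1)..mid k}"
    by (intro has_integral_divide has_integral_powr_neg_diff alpha_less_1 le)
  then show ?thesis
    by (rule has_integral_cong[THEN iffD1, rotated]) (use le in \<open>auto simp: kern_eq\<close>)
qed

lemma kern_has_integral_acoef:
  "1 \<le> k \<Longrightarrow> k \<le> j \<Longrightarrow> j \<le> N \<Longrightarrow> (kern j has_integral len k * A j k) {mid (k - 1)..mid k}"
  using kern_has_integral[THEN has_integral_integrable, THEN integrable_integral] len_pos[of k]
  unfolding acoef_def by simp

lemma acoef_eq:
  "1 \<le> k \<Longrightarrow> k \<le> j \<Longrightarrow> j \<le> N \<Longrightarrow>
   A j k = ((mid j - mid (k - 1)) powr (1 - \<alpha>) - (mid j - mid k) powr (1 - \<alpha>)) / ((1 - \<alpha>) * G * len k)"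
  using kern_has_integral[THEN integral_unique] unfolding acoef_def by (simp add: field_simps)

lemma acoef_pos: "1 \<le> k \<Longrightarrow> k \<le> j \<Longrightarrow> j \<le> N \<Longrightarrow> 0 < A j k"
proof -
  assume kj: "1 \<le> k" "k \<le> j" "j \<le> N"
  have "(mid j - mid k) powr (1 - \<alpha>) < (mid j - mid (k - 1)) powr (1 - \<alpha>)"
    using kj mid_mono[of k j] mid_strict_mono[of "k - 1" k] alpha_less_1
    by (intro powr_less_mono2) auto
  then show ?thesis
    using acoef_eq[OF kj] Gamma_pos len_pos[of k] kj alpha_less_1 by auto
qed

lemma acoef_diag: "1 \<le> k \<Longrightarrow> k \<le> N \<Longrightarrow> A k k = len k powr (-\<alpha>) / ((1 - \<alpha>) * G)"
proof -
  assume k: "1 \<le> k" "k \<le> N"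
  have "len k powr (1 - \<alpha>) = len k * len k powr (-\<alpha>)"
    using len_pos[OF k] powr_add[of "len k" 1 "-\<alpha>"] by simp
  then show ?thesis
    using acoef_eq[of k k] len_eq[of k] len_pos[OF k] k by simp
qed

text \<open>The kernel increases towards its singularity at mid j, so the cell averages A j k
  interlace with its values kern j (mid k) at the grid points.\<close>

lemma integral_kern_cell: "1 \<le> k \<Longrightarrow> k \<le> N \<Longrightarrow> integral {mid (k - 1)..mid k} (kern j) = len k * A j k"
  using len_pos[of k] unfolding acoef_def by simp

lemma acoef_le_kern: "1 \<le> k \<Longrightarrow> k < j \<Longrightarrow> j \<le> N \<Longrightarrow> A j k \<le> kern j (mid k)"
proof -
  assume kj: "1 \<le> k" "k < j" "j \<le> N"
  have "len k * A j k = integral {mid (k - 1)..mid k} (kern j)"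
    using integral_kern_cell kj by simp
  also have "\<dots> \<le> integral {mid (k - 1)..mid k} (\<lambda>s. kern j (mid k))"
    using kj mid_strict_mono[of k j] kern_has_integral[of k j]
    by (intro integral_le) (auto intro!: kern_mono)
  also have "\<dots> = len k * kern j (mid k)"
    by (rule integral_const_cell) (use kj in auto)
  finally show ?thesis
    using len_pos[of k] kj by simp
qed

lemma kern_le_acoef_Suc: "1 \<le> k \<Longrightarrow> k < j \<Longrightarrow> j \<le> N \<Longrightarrow> kern j (mid k) \<le> A j (k + 1)"
proof -
  assume kj: "1 \<le> k" "k < j" "j \<le> N"
  let ?S = "{mid (k + 1 - 1)..mid (k + 1)}"
  define g where "g s = (if s = mid j then kern j (mid k) else kern j s)" for s
  have "kern j integrable_on ?S"
    using kern_has_integral[of "k + 1" j] kj by auto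
  then have "g integrable_on ?S"
    by (rule integrable_spike[where S="{mid j}"]) (auto simp: g_def)
  have "len (k + 1) * kern j (mid k) = integral ?S (\<lambda>s. kern j (mid k))"
    by (rule integral_const_cell[symmetric]) (use kj in auto)
  also have "\<dots> \<le> integral ?S g"
    using \<open>g integrable_on ?S\<close> mid_mono[of "k + 1" j] kj
    by (intro integral_le) (auto simp: g_def intro!: kern_mono)
  also have "\<dots> = integral ?S (kern j)"
    by (rule integral_spike[of "{mid j}"]) (auto simp: g_def)
  also have "\<dots> = len (k + 1) * A j (k + 1)"
    using integral_kern_cell[of "k + 1"] kj by simp
  finally show ?thesis
    using len_pos[of "k + 1"] kj by simp
qed

lemma acoef_mono: "1 \<le> k \<Longrightarrow> k < j \<Longrightarrow> j \<le> N \<Longrightarrow> A j k \<le> A j (k + 1)"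
  using acoef_le_kern kern_le_acoef_Suc by (meson order_trans)

lemma dcc_nonneg: "n \<le> N \<Longrightarrow> m < n \<Longrightarrow> 0 \<le> dcc \<alpha> t n m"
proof (induction m rule: less_induct)
  case (less m)
  show ?case
  proof (cases "m = 0")
    case True
    then show ?thesis
      using acoef_pos[of n n] less.prems by (subst dcc.simps) auto
  next
    case False
    have "0 \<le> (\<Sum>j\<in>{n - m + 1 .. n}. (A j (n - m + 1) - A j (n - m)) * p n j)"
    proof (intro sum_nonneg mult_nonneg_nonneg)
      fix j assume "j \<in> {n - m + 1 .. n}"
      then show "0 \<le> A j (n - m + 1) - A j (n - m)" "0 \<le> p n j"
        using acoef_mono[of "n - m" j] less.IH[of "n - j"] less.prems False by auto
    qed
    moreover have "0 < A (n - m) (n - m)"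
      using acoef_pos less.prems False by auto
    ultimately show ?thesis
      using False by (subst dcc.simps) auto
  qed
qed

lemma dcc_recursion:
  "n \<le> N \<Longrightarrow> 1 \<le> k \<Longrightarrow> k < n \<Longrightarrow>
   p n k * A k k = (\<Sum>j=k+1..n. (A j (k + 1) - A j k) * p n j)"
  using acoef_pos[of k k] by (subst dcc.simps) (simp add: Suc_diff_le)

lemma dcc_acoef_sum:
  assumes "n \<le> N" "1 \<le> k" "k \<le> n"
  shows "(\<Sum>j=k..n. p n j * A j k) = 1"
  using \<open>k \<le> n\<close> \<open>1 \<le> k\<close>
proof (induction k rule: inc_induct)
  case base
  then show ?case
    using acoef_pos[of n n] \<open>n \<le> N\<close> by (subst dcc.simps) auto
next
  case (step k)
  have "(\<Sum>j=k..n. p n j * A j k) = p n k * A k k + (\<Sum>j=k+1..n. p n j * A j k)"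
    using step.hyps by (simp add: sum.atLeast_Suc_atMost)
  also have "\<dots> = (\<Sum>j=k+1..n. p n j * A j (k + 1))"
    using dcc_recursion[of n k] step \<open>n \<le> N\<close> by (simp add: sum.distrib[symmetric] algebra_simps)
  also have "\<dots> = 1"
    using step by simp
  finally show ?case .
qed

end

section \<open>Cell decomposition of the consistency error\<close>

definition first_cell_const :: "real \<Rightarrow> real \<Rightarrow> real \<Rightarrow> real" where
  "first_cell_const cv \<sigma> T = cv * (2 * T powr (2 - \<sigma>) + (2 + 1 / \<sigma>) / \<bar>\<sigma> - 1\<bar>)"

definition interior_const :: "real \<Rightarrow> real \<Rightarrow> real \<Rightarrow> real" where
  "interior_const cv \<sigma> T = cv * (T powr (2 - \<sigma>) + 1)"

definition error_const :: "real \<Rightarrow> real \<Rightarrow> real \<Rightarrow> real" where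
  "error_const cv \<sigma> T =
     2 * first_cell_const cv \<sigma> T + cv * (2 + 3 / \<sigma>) / \<bar>\<sigma> - 1\<bar> + 2 * interior_const cv \<sigma> T"

lemma error_const_pos: "0 < cv \<Longrightarrow> 0 < \<sigma> \<Longrightarrow> 0 < error_const cv \<sigma> T"
  unfolding error_const_def first_cell_const_def interior_const_def
  by (intro add_nonneg_pos add_nonneg_nonneg mult_pos_pos mult_nonneg_nonneg divide_nonneg_nonneg
      add_pos_nonneg) auto

locale consistency_setting = midpoint_mesh +
  fixes v v1 v2 :: "real \<Rightarrow> real" and cv \<sigma> T :: real
  assumes N_pos: "1 \<le> N" and t_N: "t N = T"
    and v_cont: "continuous_on {0..T} v"
    and v_deriv: "\<And>s. s \<in> {0<..T} \<Longrightarrow> (v has_real_derivative v1 s) (at s within {0<..T})"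
    and v1_deriv: "\<And>s. s \<in> {0<..T} \<Longrightarrow> (v1 has_real_derivative v2 s) (at s within {0<..T})"
    and v2_bound: "\<And>s. s \<in> {0<..T} \<Longrightarrow> \<bar>v2 s\<bar> \<le> cv * (1 + s powr (\<sigma> - 2))"
    and cv_pos: "0 < cv"
    and sigma: "(0 < \<sigma> \<and> \<sigma> < 1) \<or> (1 < \<sigma> \<and> \<sigma> < 2)"
begin

abbreviation "L \<equiv> 1 / \<bar>\<sigma> - 1\<bar>"
abbreviation "K0 \<equiv> first_cell_const cv \<sigma> T"
abbreviation "b \<equiv> mid 1"
abbreviation "curv k \<equiv> cv * (1 + mid (k - 1) powr (\<sigma> - 2))"

lemma sigma_pos: "0 < \<sigma>" and sigma_less_2: "\<sigma> < 2" and sigma_ne_1: "\<sigma> \<noteq> 1"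
  using sigma by auto

lemma b_pos: "0 < b" and b_le_T: "b \<le> T" and len_1: "len 1 = b"
  using mid_pos[of 1] mid_le_t_N[of 1] len_eq[of 1] N_pos mid_0 t_N by auto

lemma mid_le_T: "k \<le> N \<Longrightarrow> mid k \<le> T"
  using mid_le_t_N t_N by simp

lemma at_within_T: "0 < s \<Longrightarrow> s < T \<Longrightarrow> at s within {0<..T} = at s"
  by (rule at_within_open_subset[of s "{0<..<T}"]) auto

lemma v_deriv_at: "0 < s \<Longrightarrow> s < T \<Longrightarrow> (v has_real_derivative v1 s) (at s)"
  using v_deriv[of s] at_within_T by simp

lemma v1_deriv_at: "0 < s \<Longrightarrow> s < T \<Longrightarrow> (v1 has_real_derivative v2 s) (at s)"
  using v1_deriv[of s] at_within_T by simp

lemma v1_cont: "continuous_on {0<..T} v1"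
  using v1_deriv by (rule DERIV_continuous_on)

lemma v1_lipschitz:
  assumes "0 < a" "a \<le> r" "r \<le> s" "s \<le> T"
  shows "\<bar>v1 s - v1 r\<bar> \<le> cv * (1 + a powr (\<sigma> - 2)) * (s - r)"
proof -
  define M where "M = cv * (1 + a powr (\<sigma> - 2))"
  have "\<bar>v1 s - v1 r\<bar> \<le> M * s - M * r"
  proof (rule abs_diff_le_of_deriv_bound[where f'=v2 and g'="\<lambda>_. M"])
    show "continuous_on {r..s} v1"
      using v1_cont by (rule continuous_on_subset) (use assms in auto)
    fix y assume y: "r < y" "y < s"
    then show "(v1 has_real_derivative v2 y) (at y)"
      using v1_deriv_at assms by auto
    have "\<bar>v2 y\<bar> \<le> cv * (1 + y powr (\<sigma> - 2))"
      using v2_bound[of y] y assms by auto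
    also have "\<dots> \<le> M"
      unfolding M_def using cv_pos assms y sigma_less_2
      by (intro mult_left_mono add_left_mono powr_mono2') auto
    finally show "\<bar>v2 y\<bar> \<le> M" .
  qed (use assms in \<open>auto intro!: derivative_eq_intros continuous_intros\<close>)
  then show ?thesis
    unfolding M_def by (simp add: algebra_simps)
qed

lemma v1_diff_le_near_zero:
  assumes "0 < s" "s \<le> c" "c \<le> T"
  shows "\<bar>v1 s - v1 c\<bar> \<le> cv * (c + L * s powr (\<sigma> - 1) + L * c powr (\<sigma> - 1))"
proof -
  define E where "E y = cv * (y + y powr (\<sigma> - 1) / (\<sigma> - 1))" for y
  have "\<bar>v1 c - v1 s\<bar> \<le> E c - E s"
  proof (rule abs_diff_le_of_deriv_bound[where f'=v2 and g'="\<lambda>y. cv * (1 + y powr (\<sigma> - 2))"])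
    show "continuous_on {s..c} v1"
      using v1_cont by (rule continuous_on_subset) (use assms in auto)
    show "continuous_on {s..c} E"
      unfolding E_def using assms sigma_ne_1 by (intro continuous_intros continuous_on_powr') auto
    fix y assume y: "s < y" "y < c"
    show "(v1 has_real_derivative v2 y) (at y)"
      using v1_deriv_at y assms by auto
    show "\<bar>v2 y\<bar> \<le> cv * (1 + y powr (\<sigma> - 2))"
      using v2_bound[of y] y assms by auto
    have "(E has_real_derivative cv * (1 + (\<sigma> - 1) * y powr (\<sigma> - 1 - 1) / (\<sigma> - 1))) (at y)"
      unfolding E_def using y assms by (auto intro!: derivative_eq_intros)
    then show "(E has_real_derivative cv * (1 + y powr (\<sigma> - 2))) (at y)"
      using sigma_ne_1 by simp
  qed (use assms in auto)
  also have "\<dots> = cv * (c - s) + cv * ((c powr (\<sigma> - 1) - s powr (\<sigma> - 1)) / (\<sigma> - 1))"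
    unfolding E_def by (simp add: algebra_simps diff_divide_distrib)
  also have "\<dots> \<le> cv * c + cv * (L * s powr (\<sigma> - 1) + L * c powr (\<sigma> - 1))"
  proof (intro add_mono mult_left_mono)
    have "(c powr (\<sigma> - 1) - s powr (\<sigma> - 1)) / (\<sigma> - 1) \<le> \<bar>c powr (\<sigma> - 1) - s powr (\<sigma> - 1)\<bar> / \<bar>\<sigma> - 1\<bar>"
      by (metis abs_divide abs_ge_self)
    also have "\<dots> \<le> (s powr (\<sigma> - 1) + c powr (\<sigma> - 1)) / \<bar>\<sigma> - 1\<bar>"
      by (intro divide_right_mono) (auto simp: abs_le_iff)
    finally show "(c powr (\<sigma> - 1) - s powr (\<sigma> - 1)) / (\<sigma> - 1) \<le> L * s powr (\<sigma> - 1) + L * c powr (\<sigma> - 1)"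
      by (simp add: add_divide_distrib)
  qed (use assms cv_pos in auto)
  finally show ?thesis
    by (simp add: abs_minus_commute algebra_simps)
qed

text \<open>v' may blow up at 0, where its value is arbitrary; replacing it there by v'(b)
  lets the pointwise bounds below hold on closed cells.\<close>
definition "dv s = (if s = 0 then v1 b else v1 s)"

definition "avg k = (v (mid k) - v (mid (k - 1))) / len k"

definition "cell_err j k = integral {mid (k - 1)..mid k} (\<lambda>s. kern j s * (dv s - avg k))"

lemma dv_has_integral:
  assumes "1 \<le> k" "k \<le> N"
  shows "(dv has_integral (v (mid k) - v (mid (k - 1)))) {mid (k - 1)..mid k}"
proof (rule fundamental_theorem_of_calculus_interior)
  show "mid (k - 1) \<le> mid k"
    using mid_mono assms by simp
  show "continuous_on {mid (k - 1)..mid k} v"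
    using v_cont by (rule continuous_on_subset) (use mid_0 mid_mono[of 0 "k - 1"] mid_le_T assms in auto)
  fix y assume "y \<in> {mid (k - 1)<..<mid k}"
  moreover have "0 \<le> mid (k - 1)" "mid k \<le> T"
    using mid_0 mid_mono[of 0 "k - 1"] mid_le_T assms by auto
  ultimately show "(v has_vector_derivative dv y) (at y)"
    using v_deriv_at[of y] by (simp add: dv_def has_real_derivative_iff_has_vector_derivative)
qed

lemma dv_integrable: "1 \<le> k \<Longrightarrow> k \<le> N \<Longrightarrow> dv integrable_on {mid (k - 1)..mid k}"
  using dv_has_integral by blast

lemma integral_dv_cell:
  assumes "1 \<le> k" "k \<le> N"
  shows "integral {mid (k - 1)..mid k} dv = len k * avg k"
  using integral_unique[OF dv_has_integral[OF assms]] len_pos[OF assms] unfolding avg_def by simp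

lemma integral_dv_minus_avg:
  assumes "1 \<le> k" "k \<le> N"
  shows "integral {mid (k - 1)..mid k} (\<lambda>s. dv s - avg k) = 0"
proof -
  have "integral {mid (k - 1)..mid k} (\<lambda>s. dv s - avg k)
          = integral {mid (k - 1)..mid k} dv - integral {mid (k - 1)..mid k} (\<lambda>s. avg k)"
    using dv_integrable[OF assms] by (intro integral_diff integrable_const_ivl)
  then show ?thesis
    using integral_dv_cell[OF assms] integral_const_cell[OF assms, of "avg k"] by linarith
qed

lemma dv_minus_avg_le:
  assumes "2 \<le> k" "k \<le> N" "s \<in> {mid (k - 1)..mid k}"
  shows "\<bar>dv s - avg k\<bar> \<le> len k * curv k"
proof -
  have pos: "0 < mid (k - 1)" "mid k \<le> T" "0 < len k"
    using mid_pos[of "k - 1"] mid_le_T len_pos assms by auto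
  have osc: "\<bar>dv r - dv s\<bar> \<le> len k * curv k" if "r \<in> {mid (k - 1)..mid k}" for r
  proof -
    have "\<bar>v1 r - v1 s\<bar> \<le> curv k * \<bar>r - s\<bar>"
      using v1_lipschitz[of "mid (k - 1)" r s] v1_lipschitz[of "mid (k - 1)" s r] pos that assms
      by (cases "r \<le> s") (auto simp: abs_minus_commute)
    also have "\<dots> \<le> curv k * len k"
      using that assms cv_pos len_eq[of k] by (intro mult_left_mono) auto
    finally show ?thesis
      using pos that assms by (simp add: dv_def mult.commute)
  qed
  have "\<bar>integral {mid (k - 1)..mid k} dv / (mid k - mid (k - 1)) - dv s\<bar>
      \<le> len k * curv k * (mid k - mid (k - 1)) / (mid k - mid (k - 1))"
  proof (rule abs_average_minus_le)
    show "((\<lambda>_. len k * curv k) has_integral len k * curv k * (mid k - mid (k - 1))) {mid (k - 1)..mid k}"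
      using has_integral_const_real[of "len k * curv k" "mid (k - 1)" "mid k"] len_eq[of k] pos assms
      by (simp add: mult.commute)
  qed (use osc dv_integrable[of k] len_eq[of k] pos assms in auto)
  then show ?thesis
    using integral_dv_cell[of k] len_eq[of k] pos assms by (simp add: abs_minus_commute ac_simps)
qed

lemma b_le_T_powr: "b \<le> T powr (2 - \<sigma>) * b powr (\<sigma> - 1)"
proof -
  have "b = b powr (2 - \<sigma>) * b powr (\<sigma> - 1)"
    using powr_add[of b "2 - \<sigma>" "\<sigma> - 1"] b_pos by simp
  also have "\<dots> \<le> T powr (2 - \<sigma>) * b powr (\<sigma> - 1)"
    using b_pos b_le_T sigma_less_2 by (intro mult_right_mono powr_mono2) auto
  finally show ?thesis .
qed

lemma dv_minus_avg_le_first_cell: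
  assumes "s \<in> {0..b}"
  shows "\<bar>dv s - avg 1\<bar> \<le> K0 * b powr (\<sigma> - 1) + cv * L * s powr (\<sigma> - 1)"
proof -
  define C1 where "C1 = cv * (b + L * b powr (\<sigma> - 1))"
  define C2 where "C2 = cv * L"
  have near_b: "\<bar>dv r - v1 b\<bar> \<le> C1 + C2 * r powr (\<sigma> - 1)" if "r \<in> {0..b}" for r
  proof (cases "r = 0")
    case True
    then show ?thesis
      unfolding C1_def C2_def dv_def using cv_pos b_pos by simp
  next
    case False
    then show ?thesis
      using v1_diff_le_near_zero[of r b] that b_le_T
      unfolding C1_def C2_def dv_def by (simp add: algebra_simps)
  qed
  have "((\<lambda>r. C1 + C2 * r powr (\<sigma> - 1)) has_integral b * C1 + C2 * (b powr \<sigma> / \<sigma>)) {0..b}"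
    using has_integral_const_real[of C1 0 b] has_integral_powr_from_0[of "\<sigma> - 1" b] b_pos sigma_pos
    by (intro has_integral_add has_integral_mult_right) (auto simp: mult.commute)
  then have "\<bar>integral {0..b} dv / (b - 0) - v1 b\<bar> \<le> (b * C1 + C2 * (b powr \<sigma> / \<sigma>)) / (b - 0)"
    using near_b dv_integrable[of 1] N_pos mid_0 b_pos by (intro abs_average_minus_le) auto
  moreover have "integral {0..b} dv / (b - 0) = avg 1"
    using integral_dv_cell[of 1] N_pos mid_0 len_1 b_pos by simp
  moreover have "(b * C1 + C2 * (b powr \<sigma> / \<sigma>)) / (b - 0) = C1 + C2 * b powr (\<sigma> - 1) / \<sigma>"
    using powr_add[of b 1 "\<sigma> - 1"] b_pos by (simp add: field_simps)
  ultimately have "\<bar>avg 1 - v1 b\<bar> \<le> C1 + C2 * b powr (\<sigma> - 1) / \<sigma>"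
    by simp
  then have "\<bar>dv s - avg 1\<bar> \<le> 2 * C1 + C2 * b powr (\<sigma> - 1) / \<sigma> + C2 * s powr (\<sigma> - 1)"
    using near_b[OF assms] by linarith
  also have "\<dots> = 2 * cv * b + cv * (2 + 1 / \<sigma>) / \<bar>\<sigma> - 1\<bar> * b powr (\<sigma> - 1) + C2 * s powr (\<sigma> - 1)"
    using sigma_pos sigma_ne_1 unfolding C1_def C2_def by (simp add: field_simps)
  also have "\<dots> \<le> K0 * b powr (\<sigma> - 1) + cv * L * s powr (\<sigma> - 1)"
    using b_le_T_powr cv_pos unfolding C2_def first_cell_const_def by (simp add: algebra_simps)
  finally show ?thesis .
qed

lemma cell_err_interior:
  assumes "2 \<le> k" "k \<le> j" "j \<le> N"
  shows "(\<lambda>s. kern j s * (dv s - avg k)) integrable_on {mid (k - 1)..mid k}"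
    and "\<bar>cell_err j k\<bar> \<le> len k * len k * curv k * A j k"
proof -
  have "kern j integrable_on {mid (k - 1)..mid k}"
    using assms by (intro has_integral_integrable[OF kern_has_integral_acoef]) auto
  moreover have "(\<lambda>s. dv s - avg k) integrable_on {mid (k - 1)..mid k}"
    using dv_integrable assms by (intro integrable_diff integrable_const_ivl) auto
  moreover have "((\<lambda>s. kern j s * (len k * curv k)) has_integral len k * A j k * (len k * curv k))
      {mid (k - 1)..mid k}"
    using kern_has_integral_acoef[of k j] assms by (intro has_integral_mult_left) auto
  moreover have "\<bar>kern j s * (dv s - avg k)\<bar> \<le> kern j s * (len k * curv k)"
    if "s \<in> {mid (k - 1)..mid k}" for s
    using dv_minus_avg_le[of k s] that assms kern_nonneg[of j s] by (auto simp: abs_mult intro: mult_left_mono)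
  ultimately show "(\<lambda>s. kern j s * (dv s - avg k)) integrable_on {mid (k - 1)..mid k}"
    and "\<bar>cell_err j k\<bar> \<le> len k * len k * curv k * A j k"
    using dominated_product_integral[of "kern j" "mid (k - 1)" "mid k" "\<lambda>s. dv s - avg k"]
    unfolding cell_err_def by (auto simp: ac_simps)
qed

text \<open>Away from the diagonal the cell error only sees the variation of the kernel
  across the cell, because dv - avg k has mean zero there.\<close>

lemma cell_err_interior_off_diag:
  assumes "2 \<le> k" "k < j" "j \<le> N"
  shows "\<bar>cell_err j k\<bar> \<le> len k * len k * curv k * (A j (k + 1) - A j k)"
proof -
  let ?S = "{mid (k - 1)..mid k}"
  let ?c = "kern j (mid k)"
  have prod_int: "(\<lambda>s. kern j s * (dv s - avg k)) integrable_on ?S"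
    using cell_err_interior assms by simp
  have dv_int: "(\<lambda>s. dv s - avg k) integrable_on ?S"
    using dv_integrable assms by (intro integrable_diff integrable_const_ivl) auto
  have const_int: "(\<lambda>s. ?c * (dv s - avg k)) integrable_on ?S"
    using integrable_on_cmult_left[OF dv_int, of ?c] by simp
  have "integral ?S (\<lambda>s. (kern j s - ?c) * (dv s - avg k))
          = integral ?S (\<lambda>s. kern j s * (dv s - avg k) - ?c * (dv s - avg k))"
    by (simp add: algebra_simps)
  also have "\<dots> = cell_err j k - ?c * integral ?S (\<lambda>s. dv s - avg k)"
    unfolding cell_err_def integral_diff[OF prod_int const_int] integral_mult_right ..
  finally have err_eq: "cell_err j k = integral ?S (\<lambda>s. (kern j s - ?c) * (dv s - avg k))"
    using integral_dv_minus_avg[of k] assms by simp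
  have kern_int: "(\<lambda>s. kern j s - ?c) integrable_on ?S"
    using assms by (intro integrable_diff integrable_const_ivl has_integral_integrable[OF kern_has_integral_acoef]) auto
  have bound_int: "((\<lambda>s. (?c - kern j s) * (len k * curv k)) has_integral (?c * len k - len k * A j k) * (len k * curv k)) ?S"
  proof (intro has_integral_mult_left has_integral_diff)
    show "((\<lambda>s. ?c) has_integral ?c * len k) ?S"
      using has_integral_const_real[of ?c "mid (k - 1)" "mid k"] len_eq[of k] mid_mono[of "k - 1" k] assms
      by (simp add: mult.commute)
  qed (use kern_has_integral_acoef[of k j] assms in auto)
  have bound_pt: "\<bar>(kern j s - ?c) * (dv s - avg k)\<bar> \<le> (?c - kern j s) * (len k * curv k)"
    if "s \<in> ?S" for s
  proof -
    have "kern j s \<le> ?c"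
      using that mid_strict_mono[of k j] assms by (intro kern_mono) auto
    then show ?thesis
      using dv_minus_avg_le[of k s] that assms by (auto simp: abs_mult intro: mult_left_mono)
  qed
  have "\<bar>cell_err j k\<bar> \<le> (?c * len k - len k * A j k) * (len k * curv k)"
    unfolding err_eq by (rule dominated_product_integral(2)[OF kern_int dv_int bound_int bound_pt])
  also have "\<dots> = len k * len k * curv k * (?c - A j k)"
    by (simp add: algebra_simps)
  also have "\<dots> \<le> len k * len k * curv k * (A j (k + 1) - A j k)"
    using kern_le_acoef_Suc[of k j] assms cv_pos by (intro mult_left_mono) auto
  finally show ?thesis .
qed

abbreviation "K1 \<equiv> K0 + cv * L / \<sigma>"
abbreviation "K2 \<equiv> K0 + 2 * cv * L + 2 * cv * L / \<sigma>"

lemma K0_nonneg: "0 \<le> K0"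
  using cv_pos sigma_pos unfolding first_cell_const_def by simp

lemma first_cell: "{mid (1 - 1)..mid 1} = {0..b}"
  using mid_0 by simp

lemma cell_err_first:
  assumes "2 \<le> j" "j \<le> N"
  shows "(\<lambda>s. kern j s * (dv s - avg 1)) integrable_on {mid (1 - 1)..mid 1}"
    and "\<bar>cell_err j 1\<bar> \<le> A j 2 * (K1 * b powr \<sigma>)"
proof -
  let ?g = "\<lambda>s. kern j b * (K0 * b powr (\<sigma> - 1) + cv * L * s powr (\<sigma> - 1))"
  have "(?g has_integral kern j b * (b * (K0 * b powr (\<sigma> - 1)) + cv * L * (b powr \<sigma> / \<sigma>))) {0..b}"
    using has_integral_const_real[of "K0 * b powr (\<sigma> - 1)" 0 b] b_pos sigma_pos
      has_integral_powr_from_0[of "\<sigma> - 1" b]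
    by (intro has_integral_mult_right has_integral_add) auto
  moreover have "b * (K0 * b powr (\<sigma> - 1)) + cv * L * (b powr \<sigma> / \<sigma>) = K1 * b powr \<sigma>"
    using powr_add[of b 1 "\<sigma> - 1"] b_pos by (simp add: algebra_simps)
  ultimately have g_int: "(?g has_integral kern j b * (K1 * b powr \<sigma>)) {mid (1 - 1)..mid 1}"
    unfolding first_cell by simp
  have g_bound: "\<bar>kern j s * (dv s - avg 1)\<bar> \<le> ?g s" if "s \<in> {mid (1 - 1)..mid 1}" for s
  proof -
    have "kern j s \<le> kern j b"
      using that first_cell mid_strict_mono[of 1 j] assms by (intro kern_mono) auto
    then show ?thesis
      using dv_minus_avg_le_first_cell[of s] that first_cell kern_nonneg[of j s]
      by (simp add: abs_mult mult_mono)
  qed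
  have "kern j integrable_on {mid (1 - 1)..mid 1}" "(\<lambda>s. dv s - avg 1) integrable_on {mid (1 - 1)..mid 1}"
    using kern_has_integral_acoef[of 1 j] dv_integrable[of 1] assms N_pos
    by (auto intro: has_integral_integrable integrable_diff integrable_const_ivl)
  note dominated = dominated_product_integral[OF this g_int g_bound]
  show "(\<lambda>s. kern j s * (dv s - avg 1)) integrable_on {mid (1 - 1)..mid 1}"
    by (rule dominated(1))
  have "\<bar>cell_err j 1\<bar> \<le> kern j b * (K1 * b powr \<sigma>)"
    using dominated(2) unfolding cell_err_def .
  also have "\<dots> \<le> A j 2 * (K1 * b powr \<sigma>)"
    using kern_le_acoef_Suc[of 1 j] assms K0_nonneg cv_pos sigma_pos
    by (intro mult_right_mono) (auto simp: numeral_2_eq_2)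
  finally show "\<bar>cell_err j 1\<bar> \<le> A j 2 * (K1 * b powr \<sigma>)" .
qed

lemma first_cell_majorant_integral_le:
  "((K0 + 2 * cv * L) * b powr (\<sigma> - 1) * (b powr (1 - \<alpha>) / (1 - \<alpha>))
     + cv * L * (b/2) powr (-\<alpha>) * (b powr \<sigma> / \<sigma>)) / G \<le> K2 * b powr \<sigma> * A 1 1"
proof -
  define Q where "Q = b powr \<sigma> * b powr (-\<alpha>)"
  have "(K0 + 2 * cv * L) * b powr (\<sigma> - 1) * (b powr (1 - \<alpha>) / (1 - \<alpha>)) = (K0 + 2 * cv * L) * Q / (1 - \<alpha>)"
    unfolding Q_def using b_pos by (simp add: powr_add[symmetric])
  moreover have "cv * L * (b/2) powr (-\<alpha>) * (b powr \<sigma> / \<sigma>) \<le> cv * L / \<sigma> * 2 * Q / (1 - \<alpha>)"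
  proof -
    have "(b/2) powr (-\<alpha>) = 2 powr \<alpha> * b powr (-\<alpha>)"
      using b_pos by (simp add: powr_divide powr_minus_divide)
    then have "cv * L * (b/2) powr (-\<alpha>) * (b powr \<sigma> / \<sigma>) = cv * L / \<sigma> * 2 powr \<alpha> * Q"
      unfolding Q_def by simp
    also have "\<dots> \<le> cv * L / \<sigma> * 2 * Q"
      using powr_mono[of \<alpha> 1 2] alpha_less_1 cv_pos sigma_pos unfolding Q_def
      by (intro mult_left_mono mult_right_mono) auto
    also have "\<dots> \<le> cv * L / \<sigma> * 2 * Q / (1 - \<alpha>)"
    proof -
      have "x \<le> x / (1 - \<alpha>)" if "0 \<le> x" for x
        using that alpha_pos alpha_less_1 by (simp add: le_divide_eq mult_left_le)
      moreover have "0 \<le> cv * L / \<sigma> * 2 * Q"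
        using cv_pos sigma_pos unfolding Q_def by simp
      ultimately show ?thesis .
    qed
    finally show ?thesis .
  qed
  ultimately have "(K0 + 2 * cv * L) * b powr (\<sigma> - 1) * (b powr (1 - \<alpha>) / (1 - \<alpha>))
      + cv * L * (b/2) powr (-\<alpha>) * (b powr \<sigma> / \<sigma>)
      \<le> (K0 + 2 * cv * L) * Q / (1 - \<alpha>) + cv * L / \<sigma> * 2 * Q / (1 - \<alpha>)"
    by linarith
  also have "\<dots> = ((K0 + 2 * cv * L) * Q + cv * L / \<sigma> * 2 * Q) / (1 - \<alpha>)"
    by (rule add_divide_distrib[symmetric])
  also have "(K0 + 2 * cv * L) * Q + cv * L / \<sigma> * 2 * Q = K2 * Q"
    by (simp add: algebra_simps)
  finally have "((K0 + 2 * cv * L) * b powr (\<sigma> - 1) * (b powr (1 - \<alpha>) / (1 - \<alpha>))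
      + cv * L * (b/2) powr (-\<alpha>) * (b powr \<sigma> / \<sigma>)) / G \<le> K2 * Q / (1 - \<alpha>) / G"
    using Gamma_pos by (intro divide_right_mono) auto
  also have "\<dots> = K2 * b powr \<sigma> * A 1 1"
    using acoef_diag[of 1] N_pos len_1 unfolding Q_def by simp
  finally show ?thesis .
qed

lemma cell_err_first_diag:
  shows "(\<lambda>s. kern 1 s * (dv s - avg 1)) integrable_on {mid (1 - 1)..mid 1}"
    and "\<bar>cell_err 1 1\<bar> \<le> K2 * b powr \<sigma> * A 1 1"
proof -
  define C where "C = (K0 + 2 * cv * L) * b powr (\<sigma> - 1)"
  define E where "E = cv * L * (b/2) powr (-\<alpha>)"
  let ?g = "\<lambda>s. (C * (b - s) powr (-\<alpha>) + E * s powr (\<sigma> - 1)) / G"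
  let ?I = "(C * (b powr (1 - \<alpha>) / (1 - \<alpha>)) + E * (b powr \<sigma> / \<sigma>)) / G"
  have "(?g has_integral ?I) {0..b}"
    using has_integral_powr_neg_diff[OF alpha_less_1, of 0 b b] has_integral_powr_from_0[of "\<sigma> - 1" b]
      b_pos sigma_pos
    by (intro has_integral_divide has_integral_add has_integral_mult_right) auto
  then have g_int: "(?g has_integral ?I) {mid (1 - 1)..mid 1}"
    unfolding first_cell .
  have g_bound: "\<bar>kern 1 s * (dv s - avg 1)\<bar> \<le> ?g s" if "s \<in> {mid (1 - 1)..mid 1}" for s
  proof -
    have s: "0 \<le> s" "s \<le> b"
      using that first_cell by auto
    have "\<bar>kern 1 s * (dv s - avg 1)\<bar> = kern 1 s * \<bar>dv s - avg 1\<bar>"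
      using kern_nonneg[of 1 s] by (simp add: abs_mult)
    also have "\<dots> \<le> kern 1 s * (K0 * b powr (\<sigma> - 1) + cv * L * s powr (\<sigma> - 1))"
      using dv_minus_avg_le_first_cell[of s] kern_nonneg[of 1 s] s by (intro mult_left_mono) auto
    also have "\<dots> = (b - s) powr (-\<alpha>) / G * (K0 * b powr (\<sigma> - 1) + cv * L * s powr (\<sigma> - 1))"
      using kern_eq[of s 1] s by simp
    also have "\<dots> = (K0 * b powr (\<sigma> - 1) * (b - s) powr (-\<alpha>)
                      + cv * L * ((b - s) powr (-\<alpha>) * s powr (\<sigma> - 1))) / G"
      using Gamma_pos sigma_ne_1 by (simp add: field_simps)
    also have "\<dots> \<le> (K0 * b powr (\<sigma> - 1) * (b - s) powr (-\<alpha>)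
                      + cv * L * ((b/2) powr (-\<alpha>) * s powr (\<sigma> - 1)
                                  + 2 * b powr (\<sigma> - 1) * (b - s) powr (-\<alpha>))) / G"
      using powr_neg_mult_powr_split[of b s \<alpha> \<sigma>] b_pos s alpha_pos sigma_pos cv_pos Gamma_pos
      by (intro divide_right_mono add_left_mono mult_left_mono) auto
    also have "\<dots> = ?g s"
      unfolding C_def E_def by (simp add: algebra_simps)
    finally show ?thesis .
  qed
  have "kern 1 integrable_on {mid (1 - 1)..mid 1}" "(\<lambda>s. dv s - avg 1) integrable_on {mid (1 - 1)..mid 1}"
    using kern_has_integral_acoef[of 1 1] dv_integrable[of 1] N_pos
    by (auto intro: has_integral_integrable integrable_diff integrable_const_ivl)
  note dominated = dominated_product_integral[OF this g_int g_bound]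
  show "(\<lambda>s. kern 1 s * (dv s - avg 1)) integrable_on {mid (1 - 1)..mid 1}"
    by (rule dominated(1))
  show "\<bar>cell_err 1 1\<bar> \<le> K2 * b powr \<sigma> * A 1 1"
    using dominated(2) first_cell_majorant_integral_le unfolding cell_err_def C_def E_def
    by (simp add: mult.assoc)
qed

lemma cell_err_integrable:
  assumes "1 \<le> k" "k \<le> j" "j \<le> N"
  shows "(\<lambda>s. kern j s * (dv s - avg k)) integrable_on {mid (k - 1)..mid k}"
proof -
  consider "k = 1" "j = 1" | "k = 1" "2 \<le> j" | "2 \<le> k"
    using assms by linarith
  then show ?thesis
    by cases (use cell_err_first_diag(1) cell_err_first(1)[of j] cell_err_interior(1)[of k j] assms in auto)
qed

lemma kern_dv_has_integral_cell:
  assumes "1 \<le> k" "k \<le> j" "j \<le> N"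
  shows "((\<lambda>s. kern j s * dv s) has_integral cell_err j k + A j k * (v (mid k) - v (mid (k - 1))))
           {mid (k - 1)..mid k}"
proof -
  have "((\<lambda>s. kern j s * (dv s - avg k) + avg k * kern j s) has_integral
          cell_err j k + avg k * (len k * A j k)) {mid (k - 1)..mid k}"
    unfolding cell_err_def
    using cell_err_integrable[OF assms] kern_has_integral_acoef[OF assms]
    by (intro has_integral_add has_integral_mult_right integrable_integral)
  then have "((\<lambda>s. kern j s * dv s) has_integral cell_err j k + avg k * (len k * A j k))
      {mid (k - 1)..mid k}"
    by (rule has_integral_cong[THEN iffD1, rotated]) (simp add: algebra_simps)
  moreover have "avg k * (len k * A j k) = A j k * (v (mid k) - v (mid (k - 1)))"
    using len_pos[of k] assms unfolding avg_def by simp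
  ultimately show ?thesis
    by simp
qed

lemma kern_dv_has_integral:
  "m \<le> j \<Longrightarrow> j \<le> N \<Longrightarrow>
   ((\<lambda>s. kern j s * dv s) has_integral (\<Sum>k=1..m. cell_err j k + A j k * (v (mid k) - v (mid (k - 1)))))
     {0..mid m}"
proof (induction m)
  case 0
  then show ?case
    using mid_0 has_integral_refl(2)[of "\<lambda>s. kern j s * dv s" 0] by simp
next
  case (Suc m)
  have "((\<lambda>s. kern j s * dv s) has_integral
          (\<Sum>k=1..m. cell_err j k + A j k * (v (mid k) - v (mid (k - 1))))
          + (cell_err j (Suc m) + A j (Suc m) * (v (mid (Suc m)) - v (mid (Suc m - 1))))) {0..mid (Suc m)}"
    using Suc kern_dv_has_integral_cell[of "Suc m" j] mid_0 mid_mono[of 0 m] mid_mono[of m "Suc m"]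
    by (intro has_integral_combine[of 0 "mid m"]) auto
  then show ?case
    by simp
qed

lemma Rerr_eq_sum_cell_err:
  assumes "1 \<le> j" "j \<le> N"
  shows "Rerr \<alpha> t v v1 j = (\<Sum>k=1..j. cell_err j k)"
proof -
  have "caputo \<alpha> v1 (mid j) = integral {0..mid j} (\<lambda>s. kern j s * dv s)"
    unfolding caputo_def by (rule integral_spike[of "{0}"]) (auto simp: dv_def)
  also have "\<dots> = (\<Sum>k=1..j. cell_err j k + A j k * (v (mid k) - v (mid (k - 1))))"
    using kern_dv_has_integral[of j j] assms by (simp add: integral_unique)
  finally show ?thesis
    unfolding Rerr_def by (simp add: sum.distrib)
qed

section \<open>Summation against the DCC kernels\<close>

abbreviation "K \<equiv> interior_const cv \<sigma> T"
abbreviation "weight k \<equiv> (mid k - mid 1) powr \<alpha> * mid (k - 1) powr (\<sigma> - 2) * len k powr (2 - \<alpha>)"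
abbreviation "max_weight n \<equiv> (if n < 2 then 0 else Max (weight ` {2..n}))"

definition "cell_bound j k =
  (if k = 1 then (if j = 1 then K2 * b powr \<sigma> * A 1 1 else K1 * b powr \<sigma> * A j 2)
   else if k = j then len k * len k * curv k * A k k
   else len k * len k * curv k * (A j (k + 1) - A j k))"

lemma abs_cell_err_le_cell_bound:
  assumes "1 \<le> k" "k \<le> j" "j \<le> N"
  shows "\<bar>cell_err j k\<bar> \<le> cell_bound j k"
proof -
  consider "k = 1" "j = 1" | "k = 1" "2 \<le> j" | "2 \<le> k" "k = j" | "2 \<le> k" "k < j"
    using assms by linarith
  then show ?thesis
    by cases (use cell_err_first_diag(2) cell_err_first(2)[of j] cell_err_interior(2)[of k j]
        cell_err_interior_off_diag[of k j] assms in \<open>auto simp: cell_bound_def algebra_simps\<close>)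
qed

lemma abs_Rerr_le:
  assumes "1 \<le> j" "j \<le> N"
  shows "\<bar>Rerr \<alpha> t v v1 j\<bar> \<le> (\<Sum>k=1..j. cell_bound j k)"
proof -
  have "\<bar>Rerr \<alpha> t v v1 j\<bar> \<le> (\<Sum>k=1..j. \<bar>cell_err j k\<bar>)"
    unfolding Rerr_eq_sum_cell_err[OF assms] by (rule sum_abs)
  also have "\<dots> \<le> (\<Sum>k=1..j. cell_bound j k)"
    using abs_cell_err_le_cell_bound assms by (intro sum_mono) auto
  finally show ?thesis .
qed

lemma dcc_acoef_partial_sum_le_1:
  assumes "n \<le> N" "1 \<le> k" "I \<subseteq> {k..n}"
  shows "(\<Sum>i\<in>I. p n i * A i k) \<le> 1"
proof -
  have "(\<Sum>i\<in>I. p n i * A i k) \<le> (\<Sum>i=k..n. p n i * A i k)"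
  proof (rule sum_mono2)
    fix i assume "i \<in> {k..n} - I"
    then show "0 \<le> p n i * A i k"
      using dcc_nonneg[of n "n - i"] acoef_pos[of k i] assms by simp
  qed (use assms in auto)
  then show ?thesis
    using dcc_acoef_sum[of n k] assms by (cases "k \<le> n") auto
qed

lemma first_column_le:
  assumes "1 \<le> n" "n \<le> N"
  shows "(\<Sum>j=1..n. p n j * cell_bound j 1) \<le> (K1 + K2) * b powr \<sigma>"
proof -
  have K_nonneg: "0 \<le> K1 * b powr \<sigma>" "0 \<le> K2 * b powr \<sigma>"
    using K0_nonneg cv_pos sigma_pos by auto
  have "(\<Sum>j=2..n. p n j * cell_bound j 1) = K1 * b powr \<sigma> * (\<Sum>j=2..n. p n j * A j 2)"
    unfolding sum_distrib_left by (intro sum.cong) (auto simp: cell_bound_def)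
  moreover have "(\<Sum>j=1..n. p n j * cell_bound j 1) = p n 1 * cell_bound 1 1 + (\<Sum>j=2..n. p n j * cell_bound j 1)"
    using assms by (simp add: sum.atLeast_Suc_atMost numeral_2_eq_2)
  ultimately have "(\<Sum>j=1..n. p n j * cell_bound j 1)
          = K2 * b powr \<sigma> * (\<Sum>j\<in>{1}. p n j * A j 1) + K1 * b powr \<sigma> * (\<Sum>j=2..n. p n j * A j 2)"
    by (simp add: cell_bound_def)
  also have "\<dots> \<le> K2 * b powr \<sigma> * 1 + K1 * b powr \<sigma> * 1"
    using dcc_acoef_partial_sum_le_1[of n 1 "{1}"] dcc_acoef_partial_sum_le_1[of n 2 "{2..n}"] assms K_nonneg
    by (intro add_mono mult_left_mono) auto
  finally show ?thesis
    by (simp add: algebra_simps)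
qed

lemma column_le:
  assumes "2 \<le> k" "k \<le> n" "n \<le> N"
  shows "(\<Sum>j=k..n. p n j * cell_bound j k) \<le> 2 * p n k * (len k * len k * curv k * A k k)"
proof -
  let ?H = "len k * len k * curv k"
  have "(\<Sum>j=k+1..n. p n j * cell_bound j k) = ?H * (\<Sum>j=k+1..n. (A j (k + 1) - A j k) * p n j)"
    unfolding sum_distrib_left using assms by (intro sum.cong) (auto simp: cell_bound_def)
  moreover have "cell_bound k k = ?H * A k k"
    using assms by (simp add: cell_bound_def)
  ultimately have "(\<Sum>j=k..n. p n j * cell_bound j k) = p n k * (?H * A k k) + ?H * (\<Sum>j=k+1..n. (A j (k + 1) - A j k) * p n j)"
    using assms by (simp add: sum.atLeast_Suc_atMost)
  also have "\<dots> \<le> p n k * (?H * A k k) + ?H * (p n k * A k k)"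
  proof -
    have "(\<Sum>j=k+1..n. (A j (k + 1) - A j k) * p n j) \<le> p n k * A k k"
      using dcc_recursion[of n k] dcc_nonneg[of n "n - k"] acoef_pos[of k k] assms
      by (cases "k < n") auto
    then show ?thesis
      using cv_pos by (intro add_left_mono mult_left_mono) auto
  qed
  finally show ?thesis
    by (simp add: algebra_simps)
qed

lemma curv_le: "2 \<le> k \<Longrightarrow> k \<le> N \<Longrightarrow> curv k \<le> K * mid (k - 1) powr (\<sigma> - 2)"
proof -
  assume k: "2 \<le> k" "k \<le> N"
  have pos: "0 < mid (k - 1)" "mid (k - 1) \<le> T"
    using mid_pos[of "k - 1"] mid_le_T[of "k - 1"] k by auto
  then have "1 = T powr (2 - \<sigma>) * T powr (\<sigma> - 2)"
    by (simp add: powr_add[symmetric])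
  also have "\<dots> \<le> T powr (2 - \<sigma>) * mid (k - 1) powr (\<sigma> - 2)"
    using pos sigma_less_2 by (intro mult_left_mono powr_mono2') auto
  finally show ?thesis
    using cv_pos unfolding interior_const_def by (simp add: algebra_simps)
qed

lemma diag_cell_bound_le:
  assumes "2 \<le> k" "k \<le> N"
  shows "len k * len k * curv k * A k k \<le> K / (1 - \<alpha>) * A k 2 * weight k"
proof -
  define D where "D = mid k - mid 1"
  have D_pos: "0 < D" and len_pos': "0 < len k"
    unfolding D_def using mid_strict_mono[of 1 k] len_pos[of k] assms by auto
  have len_powr: "len k * len k * len k powr (-\<alpha>) = len k powr (2 - \<alpha>)"
    using len_pos' powr_add[of "len k" 2 "-\<alpha>"] by (simp add: powr_numeral power2_eq_square)
  have "D powr \<alpha> * D powr (-\<alpha>) = 1"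
    using D_pos by (simp add: powr_add[symmetric])
  moreover have "kern k (mid 1) = D powr (-\<alpha>) / G"
    unfolding D_def using D_pos D_def by (intro kern_eq) auto
  ultimately have Gamma_inv: "1 / G = D powr \<alpha> * kern k (mid 1)"
    using Gamma_pos by simp
  have "len k * len k * curv k * A k k = curv k * (len k * len k * len k powr (-\<alpha>)) / (1 - \<alpha>) * (1 / G)"
    using acoef_diag[of k] assms by (simp add: field_simps)
  also have "\<dots> = curv k * len k powr (2 - \<alpha>) * D powr \<alpha> / (1 - \<alpha>) * kern k (mid 1)"
    unfolding len_powr Gamma_inv by simp
  also have "\<dots> \<le> curv k * len k powr (2 - \<alpha>) * D powr \<alpha> / (1 - \<alpha>) * A k 2"
    using kern_le_acoef_Suc[of 1 k] assms cv_pos alpha_less_1 by (intro mult_left_mono) (auto simp: numeral_2_eq_2)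
  also have "\<dots> \<le> K * mid (k - 1) powr (\<sigma> - 2) * len k powr (2 - \<alpha>) * D powr \<alpha> / (1 - \<alpha>) * A k 2"
    using curv_le[OF assms] acoef_pos[of 2 k] alpha_less_1 assms
    by (intro mult_right_mono divide_right_mono) auto
  also have "\<dots> = K / (1 - \<alpha>) * A k 2 * weight k"
    unfolding D_def by (simp add: field_simps)
  finally show ?thesis .
qed

lemma max_weight_nonneg: "0 \<le> max_weight n"
proof (cases "n < 2")
  case False
  have "0 \<le> weight 2" by simp
  also have "\<dots> \<le> Max (weight ` {2..n})"
    using False by (intro Max_ge imageI) auto
  finally show ?thesis
    using False by simp
qed simp

lemma column_le_max_weight:
  assumes "2 \<le> k" "k \<le> n" "n \<le> N"
  shows "(\<Sum>j=k..n. p n j * cell_bound j k) \<le> 2 * K / (1 - \<alpha>) * max_weight n * (p n k * A k 2)"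
proof -
  have "0 \<le> K / (1 - \<alpha>)" "0 < A k 2"
    using cv_pos alpha_less_1 acoef_pos[of 2 k] assms unfolding interior_const_def by auto
  then have nonneg: "0 \<le> p n k" "0 \<le> K / (1 - \<alpha>) * A k 2"
    using dcc_nonneg[of n "n - k"] assms by (simp_all only: mult_nonneg_nonneg less_imp_le)
  have "len k * len k * curv k * A k k \<le> K / (1 - \<alpha>) * A k 2 * weight k"
    using diag_cell_bound_le[of k] assms by auto
  also have "\<dots> \<le> K / (1 - \<alpha>) * A k 2 * max_weight n"
    using assms nonneg by (intro mult_left_mono) (auto intro!: Max_ge)
  finally have diag: "len k * len k * curv k * A k k \<le> K / (1 - \<alpha>) * A k 2 * max_weight n" .
  have "(\<Sum>j=k..n. p n j * cell_bound j k) \<le> 2 * p n k * (len k * len k * curv k * A k k)"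
    using column_le assms by auto
  also have "\<dots> \<le> 2 * p n k * (K / (1 - \<alpha>) * A k 2 * max_weight n)"
    using diag nonneg by (intro mult_left_mono) auto
  also have "\<dots> = 2 * K / (1 - \<alpha>) * max_weight n * (p n k * A k 2)"
    by (simp add: algebra_simps)
  finally show ?thesis .
qed

lemma interior_columns_le:
  assumes "n \<le> N"
  shows "(\<Sum>k=2..n. \<Sum>j=k..n. p n j * cell_bound j k) \<le> 2 * K / (1 - \<alpha>) * max_weight n"
proof -
  have "(\<Sum>k=2..n. \<Sum>j=k..n. p n j * cell_bound j k) \<le> (\<Sum>k=2..n. 2 * K / (1 - \<alpha>) * max_weight n * (p n k * A k 2))"
    using column_le_max_weight assms by (intro sum_mono) auto
  also have "\<dots> = 2 * K / (1 - \<alpha>) * max_weight n * (\<Sum>k=2..n. p n k * A k 2)"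
    by (simp add: sum_distrib_left)
  also have "\<dots> \<le> 2 * K / (1 - \<alpha>) * max_weight n"
    using dcc_acoef_partial_sum_le_1[of n 2 "{2..n}"] assms max_weight_nonneg[of n] cv_pos alpha_less_1
    unfolding interior_const_def by (intro mult_left_le mult_nonneg_nonneg) auto
  finally show ?thesis .
qed

lemma weighted_Rerr_le_split:
  assumes "1 \<le> n" "n \<le> N"
  shows "(\<Sum>j=1..n. p n j * \<bar>Rerr \<alpha> t v v1 j\<bar>) \<le> (K1 + K2) * b powr \<sigma> + 2 * K / (1 - \<alpha>) * max_weight n"
proof -
  have "(\<Sum>j=1..n. p n j * \<bar>Rerr \<alpha> t v v1 j\<bar>) \<le> (\<Sum>j=1..n. \<Sum>k=1..j. p n j * cell_bound j k)"
    unfolding sum_distrib_left[symmetric]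
  proof (intro sum_mono mult_left_mono)
    fix j assume "j \<in> {1..n}"
    then show "\<bar>Rerr \<alpha> t v v1 j\<bar> \<le> (\<Sum>k=1..j. cell_bound j k)" "0 \<le> p n j"
      using abs_Rerr_le[of j] dcc_nonneg[of n "n - j"] assms by auto
  qed
  also have "\<dots> = (\<Sum>k=1..n. \<Sum>j=k..n. p n j * cell_bound j k)"
    by (rule sum_triangle_swap)
  also have "\<dots> = (\<Sum>j=1..n. p n j * cell_bound j 1) + (\<Sum>k=2..n. \<Sum>j=k..n. p n j * cell_bound j k)"
    using assms by (simp add: sum.atLeast_Suc_atMost numeral_2_eq_2)
  finally show ?thesis
    using first_column_le[OF assms] interior_columns_le[OF assms(2)] by linarith
qed

lemma weighted_Rerr_le:
  assumes "1 \<le> n" "n \<le> N"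
  shows "(\<Sum>j = 1..n. dcc \<alpha> t n (n - j) * \<bar>Rerr \<alpha> t v v1 j\<bar>)
           \<le> error_const cv \<sigma> T * (tau t 1 powr \<sigma> + 1 / (1 - \<alpha>) * max_weight n)"
proof -
  have M_nonneg: "0 \<le> 1 / (1 - \<alpha>) * max_weight n"
    using max_weight_nonneg[of n] alpha_less_1 by simp
  have K_nonneg: "0 \<le> K1 + K2" "0 \<le> 2 * K"
    using K0_nonneg cv_pos sigma_pos unfolding interior_const_def by auto
  have "b powr \<sigma> \<le> tau t 1 powr \<sigma>"
    using b_pos sigma_pos by (intro powr_mono2) (auto simp: th_def t_0)
  then have "(K1 + K2) * b powr \<sigma> \<le> (K1 + K2) * tau t 1 powr \<sigma>"
    using K_nonneg by (intro mult_left_mono) auto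
  then have "(\<Sum>j = 1..n. dcc \<alpha> t n (n - j) * \<bar>Rerr \<alpha> t v v1 j\<bar>)
      \<le> (K1 + K2) * tau t 1 powr \<sigma> + 2 * K * (1 / (1 - \<alpha>) * max_weight n)"
    using weighted_Rerr_le_split[OF assms] by simp
  also have "\<dots> \<le> (K1 + K2 + 2 * K) * (tau t 1 powr \<sigma> + 1 / (1 - \<alpha>) * max_weight n)"
  proof -
    have distrib: "a * x + c * y \<le> (a + c) * (x + y)"
      if "0 \<le> a" "0 \<le> c" "0 \<le> x" "0 \<le> y" for a c x y :: real
      using that by (simp add: algebra_simps)
    show ?thesis
      by (rule distrib) (use K_nonneg M_nonneg in auto)
  qed
  also have "K1 + K2 + 2 * K = error_const cv \<sigma> T"
    unfolding error_const_def by (simp add: algebra_simps add_divide_distrib)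
  finally show ?thesis .
qed

end

theorem corollary2p1:
  fixes cv \<sigma> T :: real
  assumes "cv > 0" and "(0 < \<sigma> \<and> \<sigma> < 1) \<or> (1 < \<sigma> \<and> \<sigma> < 2)" and "T > 0"
  shows "\<exists>C > 0. \<forall>(\<alpha>::real) (N::nat) (t::nat \<Rightarrow> real) (v::real \<Rightarrow> real) v1 v2.
     (0 < \<alpha> \<and> \<alpha> < 1 \<and> N \<ge> 1 \<and> t 0 = 0 \<and> t N = T
      \<and> (\<forall>n. 1 \<le> n \<and> n \<le> N \<longrightarrow> t (n - 1) < t n)
      \<and> (\<forall>n. 2 \<le> n \<and> n \<le> N \<longrightarrow> tau t (n - 1) \<le> tau t n)
      \<and> continuous_on {0..T} v
      \<and> (\<forall>s\<in>{0<..T}. (v has_real_derivative v1 s) (at s within {0<..T}))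
      \<and> (\<forall>s\<in>{0<..T}. (v1 has_real_derivative v2 s) (at s within {0<..T}))
      \<and> continuous_on {0<..T} v2
      \<and> (\<forall>s\<in>{0<..T}. \<bar>v2 s\<bar> \<le> cv * (1 + s powr (\<sigma> - 2))))
     \<longrightarrow> (\<forall>n. 1 \<le> n \<and> n \<le> N \<longrightarrow>
           (\<Sum>j = 1..n. dcc \<alpha> t n (n - j) * \<bar>Rerr \<alpha> t v v1 j\<bar>)
           \<le> C * (tau t 1 powr \<sigma>
                 + 1 / (1 - \<alpha>) *
                   (if n < 2 then 0
                    else Max ((\<lambda>j. (th t j - th t 1) powr \<alpha> * th t (j - 1) powr (\<sigma> - 2)
                                    * tauh t j powr (2 - \<alpha>)) ` {2..n}))))"
proof (intro exI[of _ "error_const cv \<sigma> T"] conjI allI impI)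
  show "0 < error_const cv \<sigma> T"
    using assms by (intro error_const_pos) auto
qed (rule consistency_setting.weighted_Rerr_le;
     use assms in \<open>auto simp: consistency_setting_def consistency_setting_axioms_def midpoint_mesh_def\<close>)

end
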